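(* Let $G$ be a graph (of arbitrary cardinality) which is a lexicographic sum, indexed by a finite graph, of graphs each of which is a clique or an independent set. Then every graph equimorphic to $G$ is isomorphic to $G$; that is, $G$ has exactly one sibling up to isomorphism.
   Context: Graphs are undirected and loopless. $G$ embeds into $G'$ if $G$ is isomorphic to an induced subgraph of $G'$; $G,G'$ are equimorphic if each embeds into the other. If $H$ is a graph on a vertex set $J$ and $(L_j)_{j\in J}$ are graphs, the lexicographic sum of the $L_j$ indexed by $H$ is the graph on the disjoint union of the vertex sets of the $L_j$ in which two vertices of the same $L_j$ are adjacent iff they are adjacent in $L_j$, and $x\in L_i$, $y\in L_j$ with $i\neq j$ are adjacent iff $\{i,j\}$ is an edge of $H$. The cliques and independent sets may be infinite. *)

theory Defs
  imports Main
begin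

type_synonym 'a graph = "'a set \<times> ('a \<Rightarrow> 'a \<Rightarrow> bool)"

definition is_graph :: "'a graph \<Rightarrow> bool" where
  "is_graph G \<longleftrightarrow> (\<forall>x y. snd G x y \<longrightarrow> x \<in> fst G \<and> y \<in> fst G \<and> x \<noteq> y \<and> snd G y x)"

definition embeds :: "'a graph \<Rightarrow> 'b graph \<Rightarrow> bool" where
  "embeds G G' \<longleftrightarrow> (\<exists>f. inj_on f (fst G) \<and> f ` fst G \<subseteq> fst G' \<and>
      (\<forall>x\<in>fst G. \<forall>y\<in>fst G. snd G x y \<longleftrightarrow> snd G' (f x) (f y)))"

definition equimorphic :: "'a graph \<Rightarrow> 'b graph \<Rightarrow> bool" where
  "equimorphic G G' \<longleftrightarrow> embeds G G' \<and> embeds G' G"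

definition isomorphic :: "'a graph \<Rightarrow> 'b graph \<Rightarrow> bool" where
  "isomorphic G G' \<longleftrightarrow> (\<exists>f. bij_betw f (fst G) (fst G') \<and>
      (\<forall>x\<in>fst G. \<forall>y\<in>fst G. snd G x y \<longleftrightarrow> snd G' (f x) (f y)))"

definition is_clique :: "'a graph \<Rightarrow> bool" where
  "is_clique G \<longleftrightarrow> (\<forall>x\<in>fst G. \<forall>y\<in>fst G. x \<noteq> y \<longrightarrow> snd G x y)"

definition is_independent :: "'a graph \<Rightarrow> bool" where
  "is_independent G \<longleftrightarrow> (\<forall>x\<in>fst G. \<forall>y\<in>fst G. \<not> snd G x y)"

definition lexsum :: "'j graph \<Rightarrow> ('j \<Rightarrow> 'a graph) \<Rightarrow> ('j \<times> 'a) graph" where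
  "lexsum H L = (SIGMA j:fst H. fst (L j),
     (\<lambda>(i, x) (j, y). i \<in> fst H \<and> j \<in> fst H \<and> x \<in> fst (L i) \<and> y \<in> fst (L j) \<and>
        (if i = j then snd (L i) x y else snd H i j)))"

end

theory Submission
  imports Defs "HOL-Library.Equipollence"
begin

text \<open>Call two vertices twins if they have the same neighbours apart from each other.
  Twinship is an equivalence relation, and adjacency of two distinct vertices depends only
  on their twin classes. In a lexicographic sum of cliques and independent sets over a
  finite graph every summand lies inside one twin class, so there are finitely many classes.

  Let f : G' \<rightarrow> G and g : G \<rightarrow> G' be embeddings, where G has finitely many twin classes.
  Embeddings reflect twins, so counting classes in both directions shows that f also
  preserves twins and meets every class of G. Along the orbit of x under g \<circ> f the twin
  class must recur, whence the class of x injects into the class of f x and back;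
  by Cantor-Schroeder-Bernstein the two classes are equipotent, and bijections between
  corresponding classes glue to an isomorphism G' \<cong> G.\<close>

lemma factor_through:
  assumes "\<And>x y. x \<in> S \<Longrightarrow> y \<in> S \<Longrightarrow> p x = p y \<Longrightarrow> q x = q y"
  obtains h where "\<And>x. x \<in> S \<Longrightarrow> q x = h (p x)"
proof
  fix x assume "x \<in> S"
  then show "q x = q (inv_into S p (p x))"
    using assms inv_into_into f_inv_into_f imageI by metis
qed

lemma
  assumes "finite (p ` S)" and "\<And>x y. x \<in> S \<Longrightarrow> y \<in> S \<Longrightarrow> p x = p y \<Longrightarrow> q x = q y"
  shows finite_image_factor: "finite (q ` S)"
    and card_image_factor_le: "card (q ` S) \<le> card (p ` S)"
proof -
  obtain h where "\<And>x. x \<in> S \<Longrightarrow> q x = h (p x)" using factor_through assms(2) by blast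
  then have "q ` S = h ` p ` S" by (simp add: image_image cong: image_cong)
  then show "finite (q ` S)" "card (q ` S) \<le> card (p ` S)"
    using assms(1) card_image_le by auto
qed

lemma factor_inj_if_card_image_eq:
  assumes "finite (p ` S)" and "\<And>x y. x \<in> S \<Longrightarrow> y \<in> S \<Longrightarrow> p x = p y \<Longrightarrow> q x = q y"
    and "card (q ` S) = card (p ` S)" and "x \<in> S" "y \<in> S" and "q x = q y"
  shows "p x = p y"
proof -
  obtain h where h: "\<And>x. x \<in> S \<Longrightarrow> q x = h (p x)" using factor_through assms(2) by blast
  then have "q ` S = h ` p ` S" by (simp add: image_image cong: image_cong)
  then have "inj_on h (p ` S)"
    using eq_card_imp_inj_on assms(1,3) by metis
  then show ?thesis
    using h assms(4-6) by (metis imageI inj_onD)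
qed

lemma graph_adj_sym: "is_graph G \<Longrightarrow> snd G x y \<longleftrightarrow> snd G y x"
  by (auto simp: is_graph_def)

lemma graph_adj_irrefl: "is_graph G \<Longrightarrow> \<not> snd G x x"
  by (auto simp: is_graph_def)

subsection \<open>Twins\<close>

definition twins :: "'a graph \<Rightarrow> 'a \<Rightarrow> 'a \<Rightarrow> bool" where
  "twins G x y \<longleftrightarrow> x \<in> fst G \<and> y \<in> fst G \<and>
     (\<forall>z\<in>fst G. z \<noteq> x \<and> z \<noteq> y \<longrightarrow> (snd G z x \<longleftrightarrow> snd G z y))"

definition twin_class :: "'a graph \<Rightarrow> 'a \<Rightarrow> 'a set" where
  "twin_class G x = {y. twins G x y}"

definition twin_classes :: "'a graph \<Rightarrow> 'a set set" where
  "twin_classes G = twin_class G ` fst G"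

lemma twins_vertices: "twins G x y \<Longrightarrow> x \<in> fst G \<and> y \<in> fst G"
  by (simp add: twins_def)

lemma twins_refl: "x \<in> fst G \<Longrightarrow> twins G x x"
  by (simp add: twins_def)

lemma twins_sym: "twins G x y \<Longrightarrow> twins G y x"
  by (auto simp: twins_def)

lemma twins_adj: "twins G a b \<Longrightarrow> z \<in> fst G \<Longrightarrow> z \<noteq> a \<Longrightarrow> z \<noteq> b \<Longrightarrow> snd G z a \<longleftrightarrow> snd G z b"
  by (simp add: twins_def)

lemma twins_trans:
  assumes G: "is_graph G" and xy: "twins G x y" and yz: "twins G y z"
  shows "twins G x z"
proof (cases "x = y \<or> y = z \<or> x = z")
  case True
  then show ?thesis using xy yz twins_refl twins_vertices by metis
next
  case False
  have "snd G z x \<longleftrightarrow> snd G z y" "snd G x y \<longleftrightarrow> snd G x z"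
    using False twins_adj[OF xy] twins_adj[OF yz] twins_vertices[OF xy] twins_vertices[OF yz] by auto
  then have "snd G y x \<longleftrightarrow> snd G y z"
    using graph_adj_sym[OF G] by blast
  then show ?thesis
    using False xy yz by (auto simp: twins_def)
qed

lemma twin_class_eq_iff:
  assumes "is_graph G" and "y \<in> fst G"
  shows "twin_class G x = twin_class G y \<longleftrightarrow> twins G x y"
proof
  assume "twin_class G x = twin_class G y"
  then show "twins G x y"
    using twins_refl[OF assms(2)] unfolding twin_class_def by blast
next
  assume "twins G x y"
  then have "twins G x z \<longleftrightarrow> twins G y z" for z
    using twins_sym twins_trans[OF assms(1)] by metis
  then show "twin_class G x = twin_class G y"
    unfolding twin_class_def by blast
qed

lemma twins_adj_cong:
  assumes G: "is_graph G" and aa': "twins G a a'" and bb': "twins G b b'"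
    and "a \<noteq> b" and "a' \<noteq> b'"
  shows "snd G a b \<longleftrightarrow> snd G a' b'"
proof -
  have V: "a \<in> fst G" "a' \<in> fst G" "b \<in> fst G" "b' \<in> fst G"
    using twins_vertices[OF aa'] twins_vertices[OF bb'] by auto
  have swap_a: "snd G a c \<longleftrightarrow> snd G a' c" if "c \<in> fst G" "c \<noteq> a" "c \<noteq> a'" for c
    using twins_adj[OF aa' that] graph_adj_sym[OF G] by blast
  have swap_b: "snd G c b \<longleftrightarrow> snd G c b'" if "c \<in> fst G" "c \<noteq> b" "c \<noteq> b'" for c
    using twins_adj[OF bb' that] graph_adj_sym[OF G] by blast
  consider "b \<noteq> a'" | "a \<noteq> b'" | "b = a'" "a = b'" by blast
  then show ?thesis
  proof cases
    case 1
    then show ?thesis using swap_a[of b] swap_b[of a'] V assms(4,5) by auto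
  next
    case 2
    then show ?thesis using swap_b[of a] swap_a[of b'] V assms(4,5) by auto
  next
    case 3
    then show ?thesis using graph_adj_sym[OF G] by blast
  qed
qed

subsection \<open>Embeddings and twins\<close>

definition is_embedding :: "('a \<Rightarrow> 'b) \<Rightarrow> 'a graph \<Rightarrow> 'b graph \<Rightarrow> bool" where
  "is_embedding f G G' \<longleftrightarrow> inj_on f (fst G) \<and> f ` fst G \<subseteq> fst G' \<and>
     (\<forall>x\<in>fst G. \<forall>y\<in>fst G. snd G x y \<longleftrightarrow> snd G' (f x) (f y))"

lemma embeds_iff_embedding: "embeds G G' \<longleftrightarrow> (\<exists>f. is_embedding f G G')"
  by (simp add: embeds_def is_embedding_def)

lemma embedding_vertex: "is_embedding f G G' \<Longrightarrow> x \<in> fst G \<Longrightarrow> f x \<in> fst G'"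
  by (auto simp: is_embedding_def)

lemma embedding_adj:
  "is_embedding f G G' \<Longrightarrow> x \<in> fst G \<Longrightarrow> y \<in> fst G \<Longrightarrow> snd G x y \<longleftrightarrow> snd G' (f x) (f y)"
  by (simp add: is_embedding_def)

lemma embedding_inj: "is_embedding f G G' \<Longrightarrow> inj_on f (fst G)"
  by (simp add: is_embedding_def)

lemma is_embedding_comp:
  "is_embedding f G1 G2 \<Longrightarrow> is_embedding g G2 G3 \<Longrightarrow> is_embedding (g \<circ> f) G1 G3"
  by (auto simp: is_embedding_def comp_inj_on image_subset_iff inj_on_subset)

lemma is_embedding_funpow: "is_embedding h G G \<Longrightarrow> is_embedding (h ^^ n) G G"
proof (induction n)
  case 0
  then show ?case by (simp add: is_embedding_def)
next
  case (Suc n)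
  then show ?case using is_embedding_comp by (metis funpow.simps(2))
qed

lemma embedding_reflects_twins:
  assumes f: "is_embedding f G G'" and "x \<in> fst G" "y \<in> fst G" and "twins G' (f x) (f y)"
  shows "twins G x y"
  unfolding twins_def
proof (intro conjI ballI impI)
  fix z assume z: "z \<in> fst G" "z \<noteq> x \<and> z \<noteq> y"
  have "f z \<noteq> f x" "f z \<noteq> f y"
    using z assms inj_onD[OF embedding_inj[OF f]] by metis+
  then have "snd G' (f z) (f x) \<longleftrightarrow> snd G' (f z) (f y)"
    using twins_adj[OF assms(4)] embedding_vertex[OF f z(1)] by blast
  then show "snd G z x \<longleftrightarrow> snd G z y"
    using embedding_adj[OF f] z assms(2,3) by blast
qed (use assms in auto)

subsection \<open>Equimorphic graphs with finitely many twin classes\<close>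

lemma embedding_reflects_twin_class:
  assumes "is_graph G" "is_graph G'" and f: "is_embedding f G' G"
    and x: "x \<in> fst G'" and y: "y \<in> fst G'" and "twin_class G (f x) = twin_class G (f y)"
  shows "twin_class G' x = twin_class G' y"
proof -
  have "twins G (f x) (f y)"
    using assms(6) twin_class_eq_iff[OF assms(1) embedding_vertex[OF f y]] by blast
  then have "twins G' x y"
    using embedding_reflects_twins[OF f x y] by blast
  then show ?thesis
    using twin_class_eq_iff[OF assms(2) y] by blast
qed

lemma
  assumes G: "is_graph G" and G': "is_graph G'" and f: "is_embedding f G' G"
    and fin: "finite (twin_classes G)"
  shows finite_twin_classes_embedding: "finite (twin_classes G')"
    and card_twin_classes_embedding_le: "card (twin_classes G') \<le> card (twin_class G ` f ` fst G')"
proof -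
  let ?p = "\<lambda>x. twin_class G (f x)"
  have p_image: "?p ` fst G' = twin_class G ` f ` fst G'"
    by (simp only: image_image)
  have "twin_class G ` f ` fst G' \<subseteq> twin_classes G"
    using embedding_vertex[OF f] by (auto simp: twin_classes_def)
  then have fin_p: "finite (?p ` fst G')"
    unfolding p_image using fin by (rule finite_subset)
  note factor = embedding_reflects_twin_class[OF G G' f]
  show "finite (twin_classes G')"
    unfolding twin_classes_def using fin_p factor by (rule finite_image_factor)
  show "card (twin_classes G') \<le> card (twin_class G ` f ` fst G')"
    unfolding twin_classes_def p_image[symmetric] using fin_p factor by (rule card_image_factor_le)
qed

locale mutual_embeddings =
  fixes G :: "'a graph" and G' :: "'b graph" and f :: "'b \<Rightarrow> 'a" and g :: "'a \<Rightarrow> 'b"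
  assumes graph: "is_graph G" and graph': "is_graph G'"
    and f: "is_embedding f G' G" and g: "is_embedding g G G'"
    and finite_twin_classes: "finite (twin_classes G)"
begin

lemma finite_twin_classes': "finite (twin_classes G')"
  using finite_twin_classes_embedding[OF graph graph' f finite_twin_classes] .

text \<open>Counting twin classes through f and through g gives a cycle of inequalities.\<close>
lemma
  shows card_twin_classes_image: "card (twin_classes G') = card (twin_class G ` f ` fst G')"
    and twin_classes_image: "twin_class G ` f ` fst G' = twin_classes G"
proof -
  have sub: "twin_class G ` f ` fst G' \<subseteq> twin_classes G"
    using embedding_vertex[OF f] by (auto simp: twin_classes_def)
  have sub': "twin_class G' ` g ` fst G \<subseteq> twin_classes G'"
    using embedding_vertex[OF g] by (auto simp: twin_classes_def)
  note le = card_twin_classes_embedding_le[OF graph graph' f finite_twin_classes]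
    card_twin_classes_embedding_le[OF graph' graph g finite_twin_classes']
    card_mono[OF finite_twin_classes sub] card_mono[OF finite_twin_classes' sub']
  then show "card (twin_classes G') = card (twin_class G ` f ` fst G')"
    by linarith
  show "twin_class G ` f ` fst G' = twin_classes G"
    using card_subset_eq[OF finite_twin_classes sub] le by linarith
qed

lemma embedding_preserves_twins:
  assumes x: "x \<in> fst G'" and y: "y \<in> fst G'" and "twins G' x y"
  shows "twins G (f x) (f y)"
proof -
  let ?p = "\<lambda>x. twin_class G (f x)"
  have p_image: "?p ` fst G' = twin_class G ` f ` fst G'"
    by (simp only: image_image)
  have fin_p: "finite (?p ` fst G')"
    unfolding p_image twin_classes_image by (rule finite_twin_classes)
  have card_eq: "card (twin_class G' ` fst G') = card (?p ` fst G')"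
    using card_twin_classes_image unfolding twin_classes_def p_image .
  have "twin_class G' x = twin_class G' y"
    using twin_class_eq_iff[OF graph' y] assms(3) by blast
  then have "twin_class G (f x) = twin_class G (f y)"
    using factor_inj_if_card_image_eq[OF fin_p _ card_eq x y]
      embedding_reflects_twin_class[OF graph graph' f] by blast
  then show ?thesis
    using twin_class_eq_iff[OF graph embedding_vertex[OF f y]] by blast
qed

lemma twin_of_image:
  assumes "v \<in> fst G"
  obtains x where "x \<in> fst G'" and "twins G v (f x)"
proof -
  have "twin_class G v \<in> twin_class G ` f ` fst G'"
    using assms twin_classes_image unfolding twin_classes_def by blast
  then obtain x where "x \<in> fst G'" and "twin_class G v = twin_class G (f x)"
    by blast
  then show thesis
    using that twin_class_eq_iff[OF graph embedding_vertex[OF f]] by blast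
qed

lemma twin_class_lepoll:
  assumes "x \<in> fst G'"
  shows "twin_class G' x \<lesssim> twin_class G (f x)"
  unfolding lepoll_def
proof (intro exI conjI)
  have "twin_class G' x \<subseteq> fst G'"
    by (auto simp: twin_class_def twins_def)
  then show "inj_on f (twin_class G' x)"
    using embedding_inj[OF f] inj_on_subset by blast
  show "f ` twin_class G' x \<subseteq> twin_class G (f x)"
    using assms embedding_preserves_twins twins_vertices by (fastforce simp: twin_class_def)
qed

end

sublocale mutual_embeddings \<subseteq> swap: mutual_embeddings G' G g f
  using graph graph' f g finite_twin_classes' by unfold_locales

context mutual_embeddings
begin

lemma embedding_funpow_comp: "is_embedding ((g \<circ> f) ^^ n) G' G'"
  using is_embedding_funpow is_embedding_comp[OF f g] by blast

lemma twin_class_lepoll_funpow: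
  assumes "x \<in> fst G'"
  shows "twin_class G' x \<lesssim> twin_class G' (((g \<circ> f) ^^ n) x)"
  using assms
proof (induction n arbitrary: x)
  case 0
  then show ?case by simp
next
  case (Suc n)
  have "twin_class G' x \<lesssim> twin_class G (f x)"
    using twin_class_lepoll[OF Suc.prems] .
  also have "\<dots> \<lesssim> twin_class G' ((g \<circ> f) x)"
    using swap.twin_class_lepoll embedding_vertex[OF f Suc.prems] by simp
  also have "\<dots> \<lesssim> twin_class G' (((g \<circ> f) ^^ n) ((g \<circ> f) x))"
    using Suc.IH embedding_vertex[OF is_embedding_comp[OF f g] Suc.prems] .
  finally show ?case
    by (simp only: funpow_Suc_right comp_apply[of "(g \<circ> f) ^^ n"])
qed

text \<open>Pigeonhole on the finitely many twin classes along the orbit of x, then cancel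
  the common prefix with the twin-reflecting embedding (g \<circ> f)^^i.\<close>
lemma orbit_returns_to_twin_class:
  assumes x: "x \<in> fst G'"
  obtains m where "twins G' x (((g \<circ> f) ^^ Suc m) x)"
proof -
  let ?t = "g \<circ> f"
  note t = embedding_funpow_comp
  have "range (\<lambda>n. twin_class G' ((?t ^^ n) x)) \<subseteq> twin_classes G'"
    using embedding_vertex[OF t x] by (auto simp: twin_classes_def)
  then have "\<not> inj (\<lambda>n. twin_class G' ((?t ^^ n) x))"
    using finite_twin_classes' finite_subset finite_imageD infinite_UNIV_nat by blast
  then obtain i j where "i < j" and "twin_class G' ((?t ^^ i) x) = twin_class G' ((?t ^^ j) x)"
    unfolding inj_def by (metis linorder_neqE_nat)
  moreover obtain m where j: "j = i + Suc m"
    using \<open>i < j\<close> less_iff_Suc_add by auto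
  ultimately have "twins G' ((?t ^^ i) x) ((?t ^^ i) ((?t ^^ Suc m) x))"
    using twin_class_eq_iff[OF graph'] embedding_vertex[OF t x]
    by (metis funpow_add comp_apply)
  then have "twins G' x ((?t ^^ Suc m) x)"
    using embedding_reflects_twins[OF t x embedding_vertex[OF t x]] by blast
  then show thesis ..
qed

lemma twin_class_eqpoll:
  assumes x: "x \<in> fst G'"
  shows "twin_class G' x \<approx> twin_class G (f x)"
proof (rule lepoll_antisym)
  show "twin_class G' x \<lesssim> twin_class G (f x)"
    using twin_class_lepoll[OF x] .
  obtain m where m: "twins G' x (((g \<circ> f) ^^ Suc m) x)"
    using orbit_returns_to_twin_class[OF x] .
  have gfx: "g (f x) \<in> fst G'"
    using embedding_vertex[OF g embedding_vertex[OF f x]] .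
  have "twin_class G (f x) \<lesssim> twin_class G' (g (f x))"
    using swap.twin_class_lepoll embedding_vertex[OF f x] .
  also have "\<dots> \<lesssim> twin_class G' (((g \<circ> f) ^^ m) (g (f x)))"
    using twin_class_lepoll_funpow[OF gfx] .
  also have "\<dots> = twin_class G' x"
    using m twin_class_eq_iff[OF graph' embedding_vertex[OF embedding_funpow_comp x]]
    by (metis comp_apply funpow_Suc_right)
  finally show "twin_class G (f x) \<lesssim> twin_class G' x" .
qed

theorem isomorphic: "isomorphic G' G"
proof -
  \<comment> \<open>B x depends on x only through its twin class, so F is B x on the whole class of x.\<close>
  define B where "B x = (SOME b. bij_betw b (twin_class G' x) (twin_class G (f x)))" for x
  define F where "F x = B x x" for x
  have B: "bij_betw (B x) (twin_class G' x) (twin_class G (f x))" if "x \<in> fst G'" for x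
    unfolding B_def using twin_class_eqpoll[OF that] someI_ex unfolding eqpoll_def by metis
  have B_twins: "B y = B x" if "x \<in> fst G'" "y \<in> fst G'" "twins G' x y" for x y
    using that embedding_preserves_twins twin_class_eq_iff[OF graph'] twin_class_eq_iff[OF graph]
      embedding_vertex[OF f] unfolding B_def by metis
  have F_twin: "twins G (f x) (F x)" if "x \<in> fst G'" for x
    using bij_betwE[OF B[OF that]] twins_refl[OF that] unfolding F_def twin_class_def by blast
  have inj: "inj_on F (fst G')"
  proof (rule inj_onI)
    fix x y assume x: "x \<in> fst G'" and y: "y \<in> fst G'" and "F x = F y"
    then have "twins G (f x) (f y)"
      using F_twin twins_sym twins_trans[OF graph] by metis
    then have "twins G' x y"
      using embedding_reflects_twins[OF f x y] by blast
    then have "B x x = B x y" "x \<in> twin_class G' x" "y \<in> twin_class G' x"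
      using \<open>F x = F y\<close> B_twins[OF x y] twins_refl[OF x] unfolding F_def twin_class_def by auto
    then show "x = y"
      using bij_betw_imp_inj_on[OF B[OF x]] inj_onD by metis
  qed
  have surj: "F ` fst G' = fst G"
  proof
    show "F ` fst G' \<subseteq> fst G"
      using twins_vertices[OF F_twin] by blast
    show "fst G \<subseteq> F ` fst G'"
    proof
      fix v assume "v \<in> fst G"
      then obtain x where x: "x \<in> fst G'" and "twins G v (f x)"
        using twin_of_image by blast
      then have "v \<in> twin_class G (f x)"
        using twins_sym by (simp add: twin_class_def)
      then have "v \<in> B x ` twin_class G' x"
        using bij_betw_imp_surj_on[OF B[OF x]] by simp
      then obtain y where xy: "twins G' x y" and v: "v = B x y"
        unfolding twin_class_def by blast
      then have y: "y \<in> fst G'"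
        using twins_vertices[OF xy] by blast
      have "F y = v"
        unfolding F_def v using B_twins[OF x y xy] by simp
      then show "v \<in> F ` fst G'"
        using y by blast
    qed
  qed
  have adj: "snd G' x y \<longleftrightarrow> snd G (F x) (F y)" if x: "x \<in> fst G'" and y: "y \<in> fst G'" for x y
  proof (cases "x = y")
    case True
    then show ?thesis using graph_adj_irrefl graph graph' by metis
  next
    case False
    then have "f x \<noteq> f y" "F x \<noteq> F y"
      using inj_onD[OF embedding_inj[OF f]] inj_onD[OF inj] x y by metis+
    then show ?thesis
      using twins_adj_cong[OF graph F_twin[OF x] F_twin[OF y]] embedding_adj[OF f x y] by blast
  qed
  show ?thesis
    unfolding isomorphic_def bij_betw_def using inj surj adj by blast
qed

end

subsection \<open>Lexicographic sums\<close>

lemma lexsum_vertices: "fst (lexsum H L) = (SIGMA j:fst H. fst (L j))"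
  by (simp add: lexsum_def)

lemma lexsum_adj:
  "snd (lexsum H L) (i, x) (j, y) \<longleftrightarrow> i \<in> fst H \<and> j \<in> fst H \<and> x \<in> fst (L i) \<and> y \<in> fst (L j) \<and>
     (if i = j then snd (L i) x y else snd H i j)"
  by (simp add: lexsum_def)

lemma is_graph_lexsum:
  assumes H: "is_graph H" and L: "\<forall>j\<in>fst H. is_graph (L j)"
  shows "is_graph (lexsum H L)"
  unfolding is_graph_def
proof (intro allI impI)
  fix p q assume adj: "snd (lexsum H L) p q"
  obtain i x j y where p: "p = (i, x)" and q: "q = (j, y)" by fastforce
  have V: "i \<in> fst H" "j \<in> fst H" "x \<in> fst (L i)" "y \<in> fst (L j)"
    and summand: "if i = j then snd (L i) x y else snd H i j"
    using adj unfolding p q lexsum_adj by blast+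
  show "p \<in> fst (lexsum H L) \<and> q \<in> fst (lexsum H L) \<and> p \<noteq> q \<and> snd (lexsum H L) q p"
  proof (cases "i = j")
    case True
    have "is_graph (L i)" "snd (L i) x y"
      using L V(1) summand True by simp_all
    then have "x \<noteq> y" "snd (L i) y x"
      using graph_adj_irrefl graph_adj_sym by metis+
    then show ?thesis
      using V True by (simp add: p q lexsum_adj lexsum_vertices)
  next
    case False
    then have "snd H j i"
      using summand graph_adj_sym[OF H] by simp
    then show ?thesis
      using V False by (simp add: p q lexsum_adj lexsum_vertices)
  qed
qed

lemma lexsum_twins:
  assumes "i \<in> fst H" "x \<in> fst (L i)" "y \<in> fst (L i)"
    and "is_clique (L i) \<or> is_independent (L i)"
  shows "twins (lexsum H L) (i, x) (i, y)"
  unfolding twins_def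
proof (intro conjI ballI impI)
  show "(i, x) \<in> fst (lexsum H L)" "(i, y) \<in> fst (lexsum H L)"
    using assms by (auto simp: lexsum_vertices)
  fix z assume "z \<in> fst (lexsum H L)" "z \<noteq> (i, x) \<and> z \<noteq> (i, y)"
  moreover obtain j w where "z = (j, w)" by fastforce
  ultimately show "snd (lexsum H L) z (i, x) \<longleftrightarrow> snd (lexsum H L) z (i, y)"
    using assms by (auto simp: lexsum_adj lexsum_vertices is_clique_def is_independent_def)
qed

lemma finite_twin_classes_lexsum:
  assumes "finite (fst H)" and "\<forall>j\<in>fst H. is_clique (L j) \<or> is_independent (L j)"
    and "is_graph (lexsum H L)"
  shows "finite (twin_classes (lexsum H L))"
proof -
  have "fst ` fst (lexsum H L) \<subseteq> fst H"
    by (auto simp: lexsum_vertices)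
  then have "finite (fst ` fst (lexsum H L))"
    using assms(1) by (rule finite_subset)
  moreover have "twin_class (lexsum H L) p = twin_class (lexsum H L) q"
    if "p \<in> fst (lexsum H L)" "q \<in> fst (lexsum H L)" "fst p = fst q" for p q
  proof -
    obtain i x y where p: "p = (i, x)" and q: "q = (i, y)"
      using \<open>fst p = fst q\<close> by (cases p; cases q) auto
    have i: "i \<in> fst H" and "x \<in> fst (L i)" "y \<in> fst (L i)"
      using that unfolding p q lexsum_vertices by auto
    moreover have "is_clique (L i) \<or> is_independent (L i)"
      using assms(2) i by blast
    ultimately have "twins (lexsum H L) p q"
      unfolding p q by (rule lexsum_twins)
    then show ?thesis
      using twin_class_eq_iff[OF assms(3) \<open>q \<in> fst (lexsum H L)\<close>] by blast
  qed
  ultimately show ?thesis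
    unfolding twin_classes_def by (rule finite_image_factor)
qed

theorem theorem4p1:
  fixes H :: "'j graph" and L :: "'j \<Rightarrow> 'a graph" and G' :: "'b graph"
  assumes "is_graph H" and "finite (fst H)"
    and "\<forall>j\<in>fst H. is_graph (L j) \<and> (is_clique (L j) \<or> is_independent (L j))"
    and "is_graph G'"
    and "equimorphic G' (lexsum H L)"
  shows "isomorphic G' (lexsum H L)"
proof -
  have graph: "is_graph (lexsum H L)"
    using is_graph_lexsum assms(1,3) by blast
  moreover have "finite (twin_classes (lexsum H L))"
    using finite_twin_classes_lexsum assms(2,3) graph by metis
  moreover obtain f g where "is_embedding f G' (lexsum H L)" "is_embedding g (lexsum H L) G'"
    using assms(5) unfolding equimorphic_def embeds_iff_embedding by blast
  ultimately interpret mutual_embeddings "lexsum H L" G' f g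
    using assms(4) by unfold_locales
  show ?thesis
    by (rule isomorphic)
qed

end
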